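(* Let $m,n\ge 0$ be integers with $m-n\equiv 1\pmod 2$, put $N=m+n$ and $k=\frac{N-1}{2}$, and let $1<r<\infty$. Then $$\left(\frac{2}{r+1}+\binom{N}{k}^r+\sum_{\substack{j=0\\ j\ne k}}^{N-1}\frac{\binom{N}{j+1}^{r+1}-\binom{N}{j}^{r+1}}{(r+1)\left[\binom{N}{j+1}-\binom{N}{j}\right]}\right)^{1/r} \le 2^m\Big(\sum_{j=0}^{n}\binom{n}{j}^r\Big)^{1/r}.$$
   Context: Binomial coefficients have their usual meaning. *)

theory Defs
  imports Complex_Main
begin

end

theory Submission
  imports Defs "HOL-Analysis.Analysis"
begin

text \<open>Write \<open>b\<^sub>j = C(N,j)\<close>. Each quotient in the sum is the mean value of \<open>t^r\<close> between
\<open>b\<^sub>j\<close> and \<open>b\<^sub>j\<^sub>+\<^sub>1\<close>; by convexity of \<open>t^r\<close> it is at most the trapezoid value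
\<open>(b\<^sub>j^r + b\<^sub>j\<^sub>+\<^sub>1^r)/2\<close> (Hermite--Hadamard). The trapezoid values telescope to
\<open>\<Sum>\<^sub>j b\<^sub>j^r - 1 - b\<^sub>k^r\<close>, because the excluded middle pair has \<open>b\<^sub>k = b\<^sub>k\<^sub>+\<^sub>1\<close>;
as \<open>2/(r+1) < 1\<close>, the bracket is at most \<open>\<Sum>\<^sub>j b\<^sub>j^r\<close>. Pascal's rule and the power-mean
inequality \<open>(a+b)^r \<le> 2^(r-1) (a^r + b^r)\<close> give \<open>\<Sum>\<^sub>j C(M+1,j)^r \<le> 2^r \<Sum>\<^sub>j C(M,j)^r\<close>,
and the \<open>m\<close> steps from \<open>n\<close> to \<open>N = m + n\<close> produce the factor \<open>2^(r m)\<close>.\<close>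

text \<open>The mean value of \<open>t powr r\<close> over the interval between \<open>a\<close> and \<open>b\<close>;
the junk value at \<open>a = b\<close> is \<open>0\<close>.\<close>

definition powr_integral_mean :: "real \<Rightarrow> real \<Rightarrow> real \<Rightarrow> real" where
  "powr_integral_mean r a b = (a powr (r + 1) - b powr (r + 1)) / ((r + 1) * (a - b))"

lemma powr_integral_mean_commute: "powr_integral_mean r a b = powr_integral_mean r b a"
  unfolding powr_integral_mean_def by (simp add: divide_simps algebra_simps)

lemma powr_integral_mean_nonneg:
  fixes a b r :: real assumes "0 < a" "0 < b" "0 < r + 1"
  shows "0 \<le> powr_integral_mean r a b"
proof (cases a b rule: linorder_cases)
  case less
  then have "a powr (r + 1) < b powr (r + 1)" using assms by (intro powr_less_mono2) auto
  with less assms show ?thesis unfolding powr_integral_mean_def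
    by (intro divide_nonpos_nonpos) (auto simp: mult_nonneg_nonpos)
next
  case greater
  then have "b powr (r + 1) < a powr (r + 1)" using assms by (intro powr_less_mono2) auto
  with greater assms show ?thesis unfolding powr_integral_mean_def by simp
qed (simp add: powr_integral_mean_def)

lemma powr_above_tangent:
  fixes b t r :: real assumes "0 < b" "0 < t" "1 \<le> r"
  shows "r * t powr (r - 1) * (b - t) \<le> b powr r - t powr r"
proof -
  have "((\<lambda>x. x powr r) has_field_derivative r * t powr (r - 1)) (at t within {0<..})"
    using assms by (auto intro!: derivative_eq_intros)
  then show ?thesis
    using convex_on_imp_above_tangent[OF powr_convex[OF assms(3)]] assms
    by (simp add: interior_open)
qed

lemma powr_Suc_diff_le_trapezoid:
  fixes a b r :: real assumes "0 < b" "b < a" "1 \<le> r"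
  shows "a powr (r + 1) - b powr (r + 1) \<le> (r + 1) / 2 * (a - b) * (a powr r + b powr r)"
proof -
  define f where "f t = (r + 1) / 2 * (t - b) * (t powr r + b powr r) - t powr (r + 1)" for t
  have "f b \<le> f a"
  proof (rule DERIV_nonneg_imp_increasing_open[of b a f])
    fix t assume "b < t" "t < a"
    then have "0 < t" using assms by simp
    have "(f has_real_derivative (r + 1) / 2 * ((t powr r + b powr r)
        + (t - b) * (r * t powr (r - 1))) - (r + 1) * t powr r) (at t)"
      unfolding f_def using \<open>0 < t\<close> by (auto intro!: derivative_eq_intros simp: field_simps)
    moreover have "(r + 1) / 2 * ((t powr r + b powr r) + (t - b) * (r * t powr (r - 1)))
        - (r + 1) * t powr r = (r + 1) / 2 * (b powr r - t powr r - r * t powr (r - 1) * (b - t))"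
      by (simp add: algebra_simps)
    moreover have "0 \<le> b powr r - t powr r - r * t powr (r - 1) * (b - t)"
      using powr_above_tangent[OF assms(1) \<open>0 < t\<close> assms(3)] by simp
    ultimately show "\<exists>y. (f has_real_derivative y) (at t) \<and> 0 \<le> y"
      using assms by (metis add_nonneg_nonneg divide_nonneg_nonneg mult_nonneg_nonneg
          zero_le_numeral zero_le_one order_trans)
  next
    show "continuous_on {b..a} f" unfolding f_def using assms by (intro continuous_intros) auto
  qed (use assms in auto)
  then show ?thesis unfolding f_def by (simp add: algebra_simps)
qed

lemma powr_integral_mean_le_trapezoid:
  fixes a b r :: real assumes "0 < a" "0 < b" "1 \<le> r"
  shows "powr_integral_mean r a b \<le> (a powr r + b powr r) / 2"
proof -
  have ordered: "powr_integral_mean r x y \<le> (x powr r + y powr r) / 2" if "0 < y" "y < x" for x y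
    using powr_Suc_diff_le_trapezoid[OF that assms(3)] that assms(3)
    by (simp add: powr_integral_mean_def divide_simps mult.commute)
  show ?thesis
  proof (cases a b rule: linorder_cases)
    case less
    with assms have "powr_integral_mean r b a \<le> (b powr r + a powr r) / 2" by (intro ordered)
    then show ?thesis by (simp add: powr_integral_mean_commute[of r a b] add.commute)
  qed (use ordered assms in \<open>auto simp: powr_integral_mean_def\<close>)
qed

lemma sum_adjacent_pairs:
  fixes c :: "nat \<Rightarrow> 'a::comm_ring_1"
  shows "(\<Sum>j<N. c j + c (Suc j)) = 2 * (\<Sum>j\<le>N. c j) - c 0 - c N"
  by (induction N) (simp_all add: algebra_simps)

lemma powr_add_le_two_powr_mean:
  fixes a b r :: real assumes "0 \<le> a" "0 \<le> b" "1 \<le> r"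
  shows "(a + b) powr r \<le> 2 powr (r - 1) * (a powr r + b powr r)"
proof (cases "a = 0 \<or> b = 0")
  case True
  have "1 \<le> (2::real) powr (r - 1)" using assms by (intro ge_one_powr_ge_zero) auto
  then have "x \<le> 2 powr (r - 1) * x" if "0 \<le> x" for x :: real
    using that mult_right_mono by fastforce
  with True show ?thesis by auto
next
  case False
  with assms have "0 < a" "0 < b" by auto
  then have "((1 - 1/2) *\<^sub>R a + (1/2) *\<^sub>R b) powr r \<le> (1 - 1/2) * a powr r + (1/2) * b powr r"
    using convex_onD[OF powr_convex[OF assms(3)], of "1/2" a b] by auto
  then have "((a + b) / 2) powr r \<le> (a powr r + b powr r) / 2" by (simp add: field_simps)
  moreover have "(a + b) powr r = 2 powr r * ((a + b) / 2) powr r"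
    using \<open>0 < a\<close> \<open>0 < b\<close> by (simp add: powr_divide)
  ultimately show ?thesis by (simp add: powr_diff)
qed

lemma sum_binomial_powr_Suc_le:
  fixes r :: real assumes "1 \<le> r"
  shows "(\<Sum>i\<le>Suc M. real (Suc M choose i) powr r)
    \<le> 2 powr r * (\<Sum>i\<le>M. real (M choose i) powr r)"
proof -
  define c where "c i = real (M choose i) powr r" for i
  have pairs: "(\<Sum>i\<le>M. c i + c (Suc i)) = 2 * (\<Sum>i\<le>M. c i) - 1"
    using sum_adjacent_pairs[of c "Suc M"] by (simp add: c_def lessThan_Suc_atMost)
  have "1 \<le> (2::real) powr (r - 1)" using assms by (intro ge_one_powr_ge_zero) auto
  have "(\<Sum>i\<le>Suc M. real (Suc M choose i) powr r)
      = 1 + (\<Sum>i\<le>M. (real (M choose i) + real (M choose Suc i)) powr r)"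
    by (subst sum.atMost_Suc_shift) simp
  also have "\<dots> \<le> 1 + (\<Sum>i\<le>M. 2 powr (r - 1) * (c i + c (Suc i)))"
    unfolding c_def using assms by (intro add_left_mono sum_mono powr_add_le_two_powr_mean) auto
  also have "\<dots> = 1 + 2 powr (r - 1) * (2 * (\<Sum>i\<le>M. c i) - 1)"
    by (simp add: sum_distrib_left[symmetric] pairs)
  also have "\<dots> \<le> 2 powr r * (\<Sum>i\<le>M. c i)"
    using \<open>1 \<le> 2 powr (r - 1)\<close> by (simp add: powr_diff algebra_simps)
  finally show ?thesis unfolding c_def .
qed

lemma sum_binomial_powr_add_le:
  fixes r :: real assumes "1 \<le> r"
  shows "(\<Sum>i\<le>m + n. real ((m + n) choose i) powr r)
    \<le> 2 powr (r * m) * (\<Sum>i\<le>n. real (n choose i) powr r)"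
proof (induction m)
  case (Suc m)
  have "(\<Sum>i\<le>Suc m + n. real ((Suc m + n) choose i) powr r)
      \<le> 2 powr r * (\<Sum>i\<le>m + n. real ((m + n) choose i) powr r)"
    using sum_binomial_powr_Suc_le[OF assms, of "m + n"] by simp
  also have "\<dots> \<le> 2 powr r * (2 powr (r * m) * (\<Sum>i\<le>n. real (n choose i) powr r))"
    using Suc.IH by (intro mult_left_mono) auto
  also have "\<dots> = 2 powr (r * Suc m) * (\<Sum>i\<le>n. real (n choose i) powr r)"
    by (simp add: powr_add algebra_simps)
  finally show ?case .
qed simp

lemma binomial_powr_integral_mean_sum_le:
  fixes r :: real assumes "1 \<le> r" and N: "N = Suc (2 * k)"
  shows "2 / (r + 1) + real (N choose k) powr r
      + (\<Sum>j\<in>{0..<N} - {k}. powr_integral_mean r (real (N choose (j + 1))) (real (N choose j)))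
      \<le> (\<Sum>j\<le>N. real (N choose j) powr r)"
proof -
  define c where "c j = real (N choose j) powr r" for j
  have "N choose Suc k = N choose (N - Suc k)" by (rule binomial_symmetric) (simp add: N)
  then have middle: "c (Suc k) = c k" by (simp add: c_def N)
  have "powr_integral_mean r (real (N choose (j + 1))) (real (N choose j)) \<le> (c j + c (Suc j)) / 2"
    if "j < N" for j
    using powr_integral_mean_le_trapezoid[of "real (N choose (j + 1))" "real (N choose j)" r]
      that assms(1)
    by (simp add: c_def add.commute)
  then have "(\<Sum>j\<in>{0..<N} - {k}. powr_integral_mean r (real (N choose (j + 1))) (real (N choose j)))
      \<le> (\<Sum>j\<in>{0..<N} - {k}. (c j + c (Suc j)) / 2)"
    by (intro sum_mono) auto
  also have "\<dots> = ((\<Sum>j<N. c j + c (Suc j)) - (c k + c (Suc k))) / 2"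
    using N by (simp add: sum_diff1 atLeast0LessThan diff_divide_distrib flip: sum_divide_distrib)
  also have "\<dots> = (\<Sum>j\<le>N. c j) - 1 - c k"
    by (simp add: sum_adjacent_pairs middle) (simp add: c_def)
  moreover have "2 / (r + 1) \<le> 1" using assms by simp
  ultimately show ?thesis unfolding c_def by simp
qed

theorem mainTheorem13:
  fixes m n :: nat and r :: real
  assumes "odd (int m - int n)"
    and "1 < r"
  shows "(2 / (r + 1) + real ((m + n) choose ((m + n - 1) div 2)) powr r
          + (\<Sum>j\<in>{0..<m + n} - {(m + n - 1) div 2}.
               (real ((m + n) choose (j + 1)) powr (r + 1) - real ((m + n) choose j) powr (r + 1))
               / ((r + 1) * (real ((m + n) choose (j + 1)) - real ((m + n) choose j))))) powr (1 / r)
         \<le> 2 ^ m * (\<Sum>j = 0..n. real (n choose j) powr r) powr (1 / r)"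
    (is "?X powr _ \<le> _")
proof -
  have "odd (m + n)" using assms(1) by presburger
  then obtain k where k: "m + n = Suc (2 * k)" by (metis oddE Suc_eq_plus1)
  then have "(m + n - 1) div 2 = k" by simp
  then have X: "?X = 2 / (r + 1) + real (Suc (2 * k) choose k) powr r
      + (\<Sum>j\<in>{0..<Suc (2 * k)} - {k}.
          powr_integral_mean r (real (Suc (2 * k) choose (j + 1))) (real (Suc (2 * k) choose j)))"
    by (simp add: k powr_integral_mean_def)
  define S where "S = (\<Sum>j\<le>n. real (n choose j) powr r)"
  have "?X \<le> 2 powr (r * m) * S"
    using X binomial_powr_integral_mean_sum_le[of r "m + n" k] sum_binomial_powr_add_le[of r m n]
      assms(2)
    by (simp add: k S_def)
  moreover have "0 \<le> ?X"
    unfolding X using assms(2)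
    by (intro add_nonneg_nonneg sum_nonneg powr_integral_mean_nonneg)
      (auto simp del: binomial_Suc_Suc)
  ultimately have "?X powr (1 / r) \<le> (2 powr (r * m) * S) powr (1 / r)"
    using assms(2) by (intro powr_mono2) auto
  also have "\<dots> = 2 ^ m * S powr (1 / r)"
    using assms(2) by (simp add: powr_mult powr_powr powr_realpow)
  finally show ?thesis by (simp add: S_def atLeast0AtMost)
qed

end
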